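(* Let $G=(\mathcal{V},\mathcal{E})$ be a hypergraph, $P$ a pmf on $\mathcal{V}$, and $L\ge1$ an integer. If the subhypergraph $G_P$ of $G$ induced by $P$ is complete multipartite, then $$\max_{\ell\in[L+1]}\frac1\ell\,\theta^{(\ell)}_{L+1}(G,P)=\frac{1}{L+1}I_{L+1}(G,P).$$
   Context: Notation: $[j]=\{1,\dots,j\}$, $[i:j]=\{i,\dots,j\}$; $\log$ base 2. A hypergraph $G=(\mathcal{V},\mathcal{E})$ has finite $\mathcal{V}$ and $\mathcal{E}\subseteq2^{\mathcal{V}}$ with edges of cardinality $\ge2$. An independent set is a vertex subset none of whose subsets is an edge; a hypergraph is complete multipartite if its vertex set has a partition $\{\mathcal{I}_j\}$ into independent sets such that every vertex subset is either an edge or contained in some $\mathcal{I}_j$. $G_P=(\mathcal{V}_P,\mathcal{E}_P)$ with $\mathcal{V}_P=\mathrm{supp}(P)$ and $\mathcal{E}_P$ the edges of $G$ contained in $\mathcal{V}_P$. For $v_{[k]}\in\mathcal{V}^k$, $\sigma(v_{[k]})=\{v_1,\dots,v_k\}$, $P(v_S)=\prod_{j\in S}P(v_j)$. $I_{L+1}(G,P):=-\frac1L\log\sum_{v_{[L+1]}:\sigma(v_{[L+1]})\notin\mathcal{E}}P(v_{[L+1]})$, $\theta^{(L+1)}_{L+1}(G,P):=I_{L+1}(G,P)$, and for $\ell\in[L]$, $\theta^{(\ell)}_{L+1}(G,P):=2I_{L+1}(G,P)+\frac1L\log\sum_{v_{[\ell]}}P(v_{[\ell]})\Big[\sum_{v_{[\ell+1:L+1]}:\sigma(v_{[L+1]})\notin\mathcal{E}}P(v_{[\ell+1:L+1]})\Big]^2$.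 *)

theory Defs
  imports Complex_Main "HOL-Library.Disjoint_Sets"
begin

definition hypergraph :: "'a set \<Rightarrow> 'a set set \<Rightarrow> bool" where
  "hypergraph V E \<longleftrightarrow> finite V \<and> (\<forall>e\<in>E. e \<subseteq> V \<and> card e \<ge> 2)"

definition is_pmf :: "'a set \<Rightarrow> ('a \<Rightarrow> real) \<Rightarrow> bool" where
  "is_pmf V P \<longleftrightarrow> (\<forall>v\<in>V. P v \<ge> 0) \<and> (\<Sum>v\<in>V. P v) = 1"

definition supp :: "'a set \<Rightarrow> ('a \<Rightarrow> real) \<Rightarrow> 'a set" where
  "supp V P = {v\<in>V. P v \<noteq> 0}"

text \<open>Induced subhypergraph G_P: vertices supp P, edges of G contained in supp P.\<close>
definition induced_edges :: "'a set \<Rightarrow> 'a set set \<Rightarrow> ('a \<Rightarrow> real) \<Rightarrow> 'a set set" where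
  "induced_edges V E P = {e\<in>E. e \<subseteq> supp V P}"

definition independent_set :: "'a set \<Rightarrow> 'a set set \<Rightarrow> 'a set \<Rightarrow> bool" where
  "independent_set V E S \<longleftrightarrow> S \<subseteq> V \<and> (\<forall>T. T \<subseteq> S \<longrightarrow> T \<notin> E)"

definition complete_multipartite :: "'a set \<Rightarrow> 'a set set \<Rightarrow> bool" where
  "complete_multipartite V E \<longleftrightarrow>
     (\<exists>Parts. partition_on V Parts \<and> (\<forall>I\<in>Parts. independent_set V E I) \<and>
          (\<forall>S. S \<subseteq> V \<longrightarrow> S \<in> E \<or> (\<exists>I\<in>Parts. S \<subseteq> I)))"

definition tuples :: "'a set \<Rightarrow> nat \<Rightarrow> 'a list set" where
  "tuples V k = {xs. set xs \<subseteq> V \<and> length xs = k}"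

definition Pt :: "('a \<Rightarrow> real) \<Rightarrow> 'a list \<Rightarrow> real" where
  "Pt P xs = prod_list (map P xs)"

definition I_L1 :: "'a set \<Rightarrow> 'a set set \<Rightarrow> ('a \<Rightarrow> real) \<Rightarrow> nat \<Rightarrow> real" where
  "I_L1 V E P L = - (1 / real L) *
     log 2 (\<Sum>xs\<in>{xs\<in>tuples V (L+1). set xs \<notin> E}. Pt P xs)"

definition theta :: "'a set \<Rightarrow> 'a set set \<Rightarrow> ('a \<Rightarrow> real) \<Rightarrow> nat \<Rightarrow> nat \<Rightarrow> real" where
  "theta V E P L l =
     (if l = L + 1 then I_L1 V E P L
      else 2 * I_L1 V E P L + (1 / real L) *
        log 2 (\<Sum>xs\<in>tuples V l. Pt P xs *
                 (\<Sum>ys\<in>{ys\<in>tuples V (L + 1 - l). set (xs @ ys) \<notin> E}. Pt P ys)\<^sup>2))"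

end

theory Submission
  imports Defs
begin

text \<open>
  If \<open>G\<^sub>P\<close> is complete multipartite with parts of masses \<open>p\<^sub>1, \<dots>, p\<^sub>r\<close>, a tuple from the
  support spans a non-edge iff it lies in a single part. Hence every sum in the definitions collapses
  to a power sum: the non-edge mass of \<open>(L+1)\<close>-tuples is \<open>\<Sum>\<^sub>i p\<^sub>i^(L+1)\<close>, and the sum
  inside \<open>\<theta>^(\<ell>)\<close> is \<open>\<Sum>\<^sub>i p\<^sub>i^(2(L+1)-\<ell>)\<close>. Monotonicity of \<open>\<ell>\<^sub>q\<close>-norms,
  \<open>\<Sum>\<^sub>i p\<^sub>i^k \<le> (\<Sum>\<^sub>i p\<^sub>i^q)^(k/q)\<close> for \<open>k \<ge> q\<close>, then gives
  \<open>\<theta>^(\<ell>) \<le> \<ell> I\<^sub>L\<^sub>+\<^sub>1 / (L+1)\<close>, with equality for \<open>\<ell> = L+1\<close>.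
\<close>

lemma finite_tuples: "finite A \<Longrightarrow> finite (tuples A k)"
  unfolding tuples_def by (rule finite_lists_length_eq)

lemma tuples_Suc: "tuples A (Suc k) = (\<lambda>(x, xs). x # xs) ` (A \<times> tuples A k)"
  unfolding tuples_def by (auto simp: length_Suc_conv image_iff)

lemma tuples_mono: "A \<subseteq> B \<Longrightarrow> tuples A k \<subseteq> tuples B k"
  unfolding tuples_def by auto

lemma sum_Pt_tuples: "finite A \<Longrightarrow> (\<Sum>xs\<in>tuples A k. Pt P xs) = sum P A ^ k"
proof (induction k)
  case 0
  have "tuples A 0 = {[]}" unfolding tuples_def by auto
  then show ?case by (simp add: Pt_def)
next
  case (Suc k)
  have inj: "inj_on (\<lambda>(x, xs). x # xs) (A \<times> tuples A k)" by (auto simp: inj_on_def)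
  have "(\<Sum>xs\<in>tuples A (Suc k). Pt P xs) = (\<Sum>(x, xs)\<in>A \<times> tuples A k. P x * Pt P xs)"
    unfolding tuples_Suc by (subst sum.reindex[OF inj]) (auto simp: Pt_def case_prod_beta)
  also have "\<dots> = (\<Sum>x\<in>A. \<Sum>xs\<in>tuples A k. P x * Pt P xs)"
    by (rule sum.cartesian_product[symmetric])
  also have "\<dots> = sum P A * sum P A ^ k"
    by (simp add: sum_distrib_left[symmetric] sum_distrib_right[symmetric] Suc)
  finally show ?case by simp
qed

lemma Pt_eq_0_outside_supp:
  assumes "xs \<in> tuples V k" "xs \<notin> tuples (supp V P) k"
  shows "Pt P xs = 0"
proof -
  from assms obtain v where "v \<in> set xs" "P v = 0"
    unfolding tuples_def supp_def by auto
  then show ?thesis unfolding Pt_def by (simp add: prod_list_zero_iff)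
qed

lemma sum_tuples_restrict_supp:
  fixes h :: "'a list \<Rightarrow> real"
  assumes "finite V"
  shows "(\<Sum>xs\<in>{xs\<in>tuples V k. Q xs}. Pt P xs * h xs)
       = (\<Sum>xs\<in>{xs\<in>tuples (supp V P) k. Q xs}. Pt P xs * h xs)"
proof (rule sum.mono_neutral_right)
  show "finite {xs\<in>tuples V k. Q xs}" using finite_tuples[OF assms] by simp
  show "{xs\<in>tuples (supp V P) k. Q xs} \<subseteq> {xs\<in>tuples V k. Q xs}"
    using tuples_mono[of "supp V P" V] by (auto simp: supp_def)
qed (auto dest: Pt_eq_0_outside_supp)

lemma disjoint_family_on_tuples:
  assumes "disjoint Parts" "k \<ge> 1"
  shows "disjoint_family_on (\<lambda>I. tuples I k) Parts"
  unfolding disjoint_family_on_def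
proof (intro ballI impI)
  fix I J assume IJ: "I \<in> Parts" "J \<in> Parts" "I \<noteq> J"
  show "tuples I k \<inter> tuples J k = {}"
  proof (rule ccontr)
    assume "tuples I k \<inter> tuples J k \<noteq> {}"
    then obtain xs where xs: "set xs \<subseteq> I" "set xs \<subseteq> J" "length xs = k"
      unfolding tuples_def by auto
    then obtain x where "x \<in> set xs" using \<open>k \<ge> 1\<close> by (cases xs) auto
    then show False using xs IJ assms(1) unfolding disjoint_def by blast
  qed
qed

lemma sum_power_le_powr_sum_power:
  fixes p :: "'b \<Rightarrow> real"
  assumes fin: "finite J" and nonneg: "\<And>j. j \<in> J \<Longrightarrow> p j \<ge> 0"
    and "0 < q" "q \<le> k" and pos: "(\<Sum>j\<in>J. p j ^ q) > 0"
  shows "(\<Sum>j\<in>J. p j ^ k) \<le> (\<Sum>j\<in>J. p j ^ q) powr (real k / real q)"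
proof -
  define s where "s = (\<Sum>j\<in>J. p j ^ q)"
  define e where "e = real (k - q) / real q"
  have each: "p j ^ k \<le> p j ^ q * s powr e" if j: "j \<in> J" for j
  proof -
    have "p j = (p j ^ q) powr (1 / real q)"
      using nonneg[OF j] \<open>0 < q\<close>
      by (cases "p j = 0") (simp_all add: powr_realpow[symmetric] powr_powr)
    also have "\<dots> \<le> s powr (1 / real q)"
      unfolding s_def using fin nonneg j by (intro powr_mono2 member_le_sum) auto
    finally have "p j ^ (k - q) \<le> (s powr (1 / real q)) ^ (k - q)"
      using nonneg[OF j] by (intro power_mono) auto
    also have "\<dots> = s powr e"
      using pos unfolding s_def e_def by (simp add: powr_realpow[symmetric] powr_powr)
    finally have "p j ^ q * p j ^ (k - q) \<le> p j ^ q * s powr e"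
      using nonneg[OF j] by (intro mult_left_mono) auto
    then show ?thesis using \<open>q \<le> k\<close> by (simp add: power_add[symmetric])
  qed
  have "(\<Sum>j\<in>J. p j ^ k) \<le> s * s powr e"
    using sum_mono[OF each] by (simp add: sum_distrib_right s_def)
  also have "\<dots> = s powr (1 + e)"
    using pos by (simp add: powr_add s_def)
  also have "1 + e = real k / real q"
    using \<open>0 < q\<close> \<open>q \<le> k\<close> by (simp add: e_def field_simps)
  finally show ?thesis unfolding s_def .
qed

lemma log_sum_power_le:
  fixes p :: "'b \<Rightarrow> real"
  assumes "finite J" "J \<noteq> {}" "\<And>j. j \<in> J \<Longrightarrow> p j > 0" "0 < q" "q \<le> k" "1 < b"
  shows "log b (\<Sum>j\<in>J. p j ^ k) \<le> real k / real q * log b (\<Sum>j\<in>J. p j ^ q)"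
proof -
  have sum_pos: "(\<Sum>j\<in>J. p j ^ n) > 0" for n
    using assms(1-3) by (intro sum_pos) auto
  have "log b (\<Sum>j\<in>J. p j ^ k) \<le> log b ((\<Sum>j\<in>J. p j ^ q) powr (real k / real q))"
    using assms sum_pos
    by (intro log_mono sum_power_le_powr_sum_power) (auto intro: less_imp_le)
  also have "\<dots> = real k / real q * log b (\<Sum>j\<in>J. p j ^ q)"
    using sum_pos by (simp add: log_powr)
  finally show ?thesis .
qed

text \<open>The parts of the complete multipartite \<open>G\<^sub>P\<close>, kept only through the property used.\<close>

locale multipartite_support =
  fixes V :: "'a set" and E :: "'a set set" and P :: "'a \<Rightarrow> real" and Parts :: "'a set set"
  assumes finite_V: "finite V"
    and partition_on_supp: "partition_on (supp V P) Parts"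
    and nonedge_iff_within_part: "S \<subseteq> supp V P \<Longrightarrow> S \<notin> E \<longleftrightarrow> (\<exists>I\<in>Parts. S \<subseteq> I)"

lemma complete_multipartite_supp_obtains_parts:
  assumes "finite V" "complete_multipartite (supp V P) (induced_edges V E P)"
  obtains Parts where "multipartite_support V E P Parts"
proof -
  obtain Parts where part: "partition_on (supp V P) Parts"
    and indep: "\<forall>I\<in>Parts. independent_set (supp V P) (induced_edges V E P) I"
    and cover: "\<forall>S. S \<subseteq> supp V P \<longrightarrow> S \<in> induced_edges V E P \<or> (\<exists>I\<in>Parts. S \<subseteq> I)"
    using assms(2) unfolding complete_multipartite_def by blast
  have "S \<notin> E \<longleftrightarrow> (\<exists>I\<in>Parts. S \<subseteq> I)" if "S \<subseteq> supp V P" for S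
    using that cover indep unfolding induced_edges_def independent_set_def by blast
  with part assms(1) have "multipartite_support V E P Parts"
    by (simp add: multipartite_support_def)
  then show thesis by (rule that)
qed

context multipartite_support
begin

lemma part_subset_supp: "I \<in> Parts \<Longrightarrow> I \<subseteq> supp V P"
  using partition_on_supp by (auto simp: partition_on_def)

lemma finite_supp: "finite (supp V P)"
  using finite_V by (simp add: supp_def)

lemma finite_Parts: "finite Parts"
  using partition_on_supp finite_supp by (simp add: partition_on_def finite_UnionD)

lemma finite_part: "I \<in> Parts \<Longrightarrow> finite I"
  using part_subset_supp finite_supp finite_subset by blast

lemma part_unique: "I \<in> Parts \<Longrightarrow> J \<in> Parts \<Longrightarrow> x \<in> I \<Longrightarrow> x \<in> J \<Longrightarrow> I = J"
  using partition_on_supp by (auto simp: partition_on_def disjoint_def)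

lemma nonedge_tuples_eq_part_tuples:
  "{xs\<in>tuples (supp V P) k. set xs \<notin> E} = (\<Union>I\<in>Parts. tuples I k)"
proof (rule set_eqI)
  fix xs
  have "set xs \<subseteq> supp V P \<and> set xs \<notin> E \<longleftrightarrow> (\<exists>I\<in>Parts. set xs \<subseteq> I)"
    using nonedge_iff_within_part[of "set xs"] part_subset_supp by blast
  then show "xs \<in> {xs\<in>tuples (supp V P) k. set xs \<notin> E} \<longleftrightarrow> xs \<in> (\<Union>I\<in>Parts. tuples I k)"
    unfolding tuples_def by auto
qed

lemma sum_part_tuples:
  assumes "k \<ge> 1"
  shows "(\<Sum>xs\<in>(\<Union>I\<in>Parts. tuples I k). f xs) = (\<Sum>I\<in>Parts. \<Sum>xs\<in>tuples I k. f xs)"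
  using partition_on_supp assms
  by (intro sum.UNION_disjoint_family finite_Parts finite_tuples finite_part ballI
      disjoint_family_on_tuples) (auto simp: partition_on_def)

lemma sum_nonedge_tuples:
  assumes "k \<ge> 1"
  shows "(\<Sum>xs\<in>{xs\<in>tuples V k. set xs \<notin> E}. Pt P xs) = (\<Sum>I\<in>Parts. sum P I ^ k)"
proof -
  have "(\<Sum>xs\<in>{xs\<in>tuples V k. set xs \<notin> E}. Pt P xs * 1)
      = (\<Sum>xs\<in>(\<Union>I\<in>Parts. tuples I k). Pt P xs)"
    unfolding sum_tuples_restrict_supp[OF finite_V] nonedge_tuples_eq_part_tuples by simp
  also have "\<dots> = (\<Sum>I\<in>Parts. sum P I ^ k)"
    using assms by (simp add: sum_part_tuples sum_Pt_tuples finite_part)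
  finally show ?thesis by simp
qed

lemma nonedge_extensions_in_part:
  assumes I: "I \<in> Parts" and xs: "xs \<in> tuples I l" and "l \<ge> 1"
  shows "{ys\<in>tuples (supp V P) m. set (xs @ ys) \<notin> E} = tuples I m"
proof -
  obtain x where x: "x \<in> set xs" using xs \<open>l \<ge> 1\<close> unfolding tuples_def by (cases xs) auto
  have xs_I: "set xs \<subseteq> I" using xs by (simp add: tuples_def)
  have "set (xs @ ys) \<notin> E \<longleftrightarrow> set ys \<subseteq> I" if ys: "set ys \<subseteq> supp V P" for ys
  proof
    assume "set (xs @ ys) \<notin> E"
    moreover have "set (xs @ ys) \<subseteq> supp V P" using ys xs_I part_subset_supp[OF I] by auto
    ultimately obtain J where J: "J \<in> Parts" "set (xs @ ys) \<subseteq> J"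
      using nonedge_iff_within_part by blast
    with I x xs_I have "J = I" by (intro part_unique) auto
    with J show "set ys \<subseteq> I" by simp
  next
    assume "set ys \<subseteq> I"
    with xs_I I part_subset_supp[OF I] show "set (xs @ ys) \<notin> E"
      using nonedge_iff_within_part[of "set (xs @ ys)"] by auto
  qed
  then show ?thesis using part_subset_supp[OF I] unfolding tuples_def by auto
qed

lemma nonedge_extensions_outside_parts:
  assumes "xs \<in> tuples (supp V P) l" "\<not> (\<exists>I\<in>Parts. set xs \<subseteq> I)"
  shows "{ys\<in>tuples (supp V P) m. set (xs @ ys) \<notin> E} = {}"
proof -
  have "set (xs @ ys) \<in> E" if "ys \<in> tuples (supp V P) m" for ys
    using that assms nonedge_iff_within_part[of "set (xs @ ys)"] unfolding tuples_def by auto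
  then show ?thesis by blast
qed

lemma sum_squared_nonedge_extensions:
  assumes "l \<ge> 1"
  shows "(\<Sum>xs\<in>tuples V l. Pt P xs * (\<Sum>ys\<in>{ys\<in>tuples V m. set (xs @ ys) \<notin> E}. Pt P ys)\<^sup>2)
       = (\<Sum>I\<in>Parts. sum P I ^ (l + 2 * m))"
proof -
  define ext where "ext xs = (\<Sum>ys\<in>{ys\<in>tuples (supp V P) m. set (xs @ ys) \<notin> E}. Pt P ys)" for xs
  have ext_V: "(\<Sum>ys\<in>{ys\<in>tuples V m. set (xs @ ys) \<notin> E}. Pt P ys) = ext xs" for xs
    using sum_tuples_restrict_supp[OF finite_V, where h = "\<lambda>_. 1"] by (simp add: ext_def)
  have ext_part: "ext xs = sum P I ^ m" if "I \<in> Parts" "xs \<in> tuples I l" for I xs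
    unfolding ext_def nonedge_extensions_in_part[OF that assms]
    using finite_part[OF that(1)] by (rule sum_Pt_tuples)
  have "(\<Sum>xs\<in>{xs\<in>tuples V l. True}. Pt P xs * (ext xs)\<^sup>2)
      = (\<Sum>xs\<in>tuples (supp V P) l. Pt P xs * (ext xs)\<^sup>2)"
    by (simp only: sum_tuples_restrict_supp[OF finite_V]) simp
  also have "\<dots> = (\<Sum>xs\<in>(\<Union>I\<in>Parts. tuples I l). Pt P xs * (ext xs)\<^sup>2)"
  proof (rule sum.mono_neutral_right)
    show "(\<Union>I\<in>Parts. tuples I l) \<subseteq> tuples (supp V P) l"
      using part_subset_supp tuples_mono by blast
    show "\<forall>xs\<in>tuples (supp V P) l - (\<Union>I\<in>Parts. tuples I l). Pt P xs * (ext xs)\<^sup>2 = 0"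
    proof
      fix xs assume xs: "xs \<in> tuples (supp V P) l - (\<Union>I\<in>Parts. tuples I l)"
      then have "\<not> (\<exists>I\<in>Parts. set xs \<subseteq> I)" by (auto simp: tuples_def)
      with xs show "Pt P xs * (ext xs)\<^sup>2 = 0" unfolding ext_def
        by (subst nonedge_extensions_outside_parts[of xs l]) auto
    qed
  qed (simp add: finite_tuples finite_supp)
  also have "\<dots> = (\<Sum>I\<in>Parts. \<Sum>xs\<in>tuples I l. Pt P xs * (sum P I ^ m)\<^sup>2)"
    using assms by (simp add: sum_part_tuples ext_part)
  also have "\<dots> = (\<Sum>I\<in>Parts. sum P I ^ (l + 2 * m))"
    by (simp add: sum_distrib_right[symmetric] sum_Pt_tuples finite_part power_add
        power_mult[symmetric] mult.commute)
  finally show ?thesis unfolding ext_V by simp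
qed

lemma sum_part_pos:
  assumes "is_pmf V P" "I \<in> Parts"
  shows "sum P I > 0"
proof -
  have "P v > 0" if "v \<in> I" for v
    using that part_subset_supp[OF assms(2)] assms(1) by (fastforce simp: supp_def is_pmf_def)
  moreover have "I \<noteq> {}" using assms(2) partition_on_supp by (auto simp: partition_on_def)
  ultimately show ?thesis using finite_part[OF assms(2)] by (intro sum_pos) auto
qed

lemma Parts_nonempty:
  assumes "is_pmf V P"
  shows "Parts \<noteq> {}"
proof
  assume "Parts = {}"
  then have "supp V P = {}" using partition_on_supp by (simp add: partition_on_def)
  then have "sum P V = 0" by (intro sum.neutral) (auto simp: supp_def)
  with assms show False by (simp add: is_pmf_def)
qed

lemma theta_div_le:
  assumes "is_pmf V P" "L \<ge> 1" "l \<in> {1..L+1}"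
  shows "theta V E P L l / real l \<le> I_L1 V E P L / real (L + 1)"
proof (cases "l = L + 1")
  case True
  then show ?thesis by (simp add: theta_def)
next
  case False
  define q where "q = L + 1"
  define k where "k = l + 2 * (q - l)"
  define s where "s n = (\<Sum>I\<in>Parts. sum P I ^ n)" for n
  have l: "1 \<le> l" "l < q" using assms(3) False by (auto simp: q_def)
  have I_eq: "I_L1 V E P L = - log 2 (s q) / real L"
    by (simp add: I_L1_def sum_nonedge_tuples s_def q_def)
  have theta_eq: "theta V E P L l = 2 * I_L1 V E P L + log 2 (s k) / real L"
    unfolding theta_def sum_squared_nonedge_extensions[OF l(1)] using False
    by (simp add: s_def k_def q_def)
  have log_le: "log 2 (s k) \<le> real k / real q * log 2 (s q)"
    unfolding s_def using l assms(1)
    by (intro log_sum_power_le finite_Parts Parts_nonempty sum_part_pos) (auto simp: k_def)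
  have "theta V E P L l = (log 2 (s k) - 2 * log 2 (s q)) / real L"
    by (simp add: theta_eq I_eq diff_divide_distrib)
  also have "\<dots> \<le> (real k / real q * log 2 (s q) - 2 * log 2 (s q)) / real L"
    using log_le by (intro divide_right_mono) auto
  also have "\<dots> = real l * (I_L1 V E P L / real (L + 1))"
    using l \<open>L \<ge> 1\<close> by (simp add: I_eq q_def k_def field_simps)
  finally show ?thesis using l by (simp add: pos_divide_le_eq mult.commute)
qed

end

theorem mainTheorem8:
  fixes V :: "'a set" and E :: "'a set set" and P :: "'a \<Rightarrow> real" and L :: nat
  assumes "hypergraph V E"
    and "is_pmf V P"
    and "L \<ge> 1"
    and "complete_multipartite (supp V P) (induced_edges V E P)"
  shows "Max ((\<lambda>l. theta V E P L l / real l) ` {1..L+1}) = I_L1 V E P L / real (L + 1)"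
proof -
  have "finite V" using assms(1) by (simp add: hypergraph_def)
  then obtain Parts where "multipartite_support V E P Parts"
    using assms(4) by (rule complete_multipartite_supp_obtains_parts)
  then interpret multipartite_support V E P Parts .
  show ?thesis
  proof (rule Max_eqI)
    show "I_L1 V E P L / real (L + 1) \<in> (\<lambda>l. theta V E P L l / real l) ` {1..L+1}"
      by (rule image_eqI[of _ _ "L + 1"]) (simp_all add: theta_def)
  qed (use theta_div_le assms(2,3) in auto)
qed

end
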